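(* Let $g\in\mathcal{G}_0$ and let $(X,\Sigma,\mu)$ be a probability space. Let $\mathcal{P}$ be a finite measurable partition of $X$ containing a set $E$ with $0<\mu(E)<1$, and let $F\in\Sigma$. Then $$H(g,\mathcal{P})\ge H_F(g,\mathcal{P})-|g'_-(1/2)|-d_{\max},$$ where $g'_-(1/2)$ is the left derivative of $g$ at $1/2$ and $d_{\max}=\sup_{x,y\in[0,1]}|g(x)-g(y)|$.
   Context: $\mathcal{G}_0$ is the set of concave functions $g:[0,1]\to\mathbb{R}$ with $g(0)=\lim_{x\to0^+}g(x)=0$. $H(g,\mathcal{P})=\sum_{A\in\mathcal{P}}g(\mu(A))$. The $g$-entropy of $\mathcal{P}$ restricted to $F$ is $H_F(g,\mathcal{P})=\sum_{B\in\mathcal{P}}g(\mu(B\cap F))$. *)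

theory Defs
  imports "HOL-Analysis.Analysis" "HOL-Probability.Probability"
begin

definition G0 :: "(real \<Rightarrow> real) set" where
  "G0 = {g. concave_on {0..1} g \<and> g 0 = 0 \<and> (g \<longlongrightarrow> 0) (at_right 0)}"

definition finite_meas_partition :: "'a measure \<Rightarrow> 'a set set \<Rightarrow> bool" where
  "finite_meas_partition M P \<longleftrightarrow> finite P \<and> P \<subseteq> sets M \<and> disjoint P \<and> \<Union>P = space M"

definition g_entropy :: "(real \<Rightarrow> real) \<Rightarrow> 'a measure \<Rightarrow> 'a set set \<Rightarrow> real" where
  "g_entropy g M P = (\<Sum>A\<in>P. g (measure M A))"

definition g_entropy_restr :: "(real \<Rightarrow> real) \<Rightarrow> 'a measure \<Rightarrow> 'a set \<Rightarrow> 'a set set \<Rightarrow> real" where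
  "g_entropy_restr g M F P = (\<Sum>B\<in>P. g (measure M (B \<inter> F)))"

definition left_deriv :: "(real \<Rightarrow> real) \<Rightarrow> real \<Rightarrow> real" where
  "left_deriv g x = Lim (at_left x) (\<lambda>y. (g y - g x) / (y - x))"

definition d_max :: "(real \<Rightarrow> real) \<Rightarrow> real" where
  "d_max g = (SUP p \<in> {0..1} \<times> {0..1}. \<bar>g (fst p) - g (snd p)\<bar>)"

end

theory Submission
  imports Defs
begin

text \<open>
  Split the blocks of the partition into light ones (\<open>\<mu>(A) \<le> 1/2\<close>) and heavy ones.
  On \<open>[0, 1/2]\<close> every chord of a concave \<open>g\<close> has slope at least \<open>g'\<^sub>-(1/2)\<close>, so a
  light block loses at most \<open>|g'\<^sub>-(1/2)| (\<mu>(A) - \<mu>(A \<inter> F))\<close>, and these losses sum to at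
  most \<open>|g'\<^sub>-(1/2)|\<close> because the block measures sum to 1. For the same reason there is
  at most one heavy block, and it loses at most \<open>d\<^sub>m\<^sub>a\<^sub>x\<close>.
\<close>

lemma concave_on_slope_le:
  fixes g :: "real \<Rightarrow> real"
  assumes "concave_on I g" "x \<in> I" "y \<in> I" "x < t" "t < y"
  shows "(g x - g y) / (x - y) \<le> (g x - g t) / (x - t)"
    and "(g t - g y) / (t - y) \<le> (g x - g y) / (x - y)"
proof -
  have "convex_on I (\<lambda>t. - g t)" using assms(1) unfolding concave_on_def .
  from convex_on_slope_le[OF this assms(2-5)]
  show "(g x - g y) / (x - y) \<le> (g x - g t) / (x - t)"
    and "(g t - g y) / (t - y) \<le> (g x - g y) / (x - y)"
    by (simp_all add: diff_divide_distrib)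
qed

lemma concave_on_left_slope_tendsto:
  fixes g :: "real \<Rightarrow> real"
  assumes cv: "concave_on {a..b} g" and "a < c" "c < b"
  shows "((\<lambda>t. (g t - g c) / (t - c)) \<longlongrightarrow> left_deriv g c) (at_left c)"
proof -
  define q where "q t = - ((g t - g c) / (t - c))" for t
  have mono: "q s \<le> q t" if "s \<in> {a..c}" "t \<in> {a..c}" "t < c" "s \<le> t" for s t
    using concave_on_slope_le(2)[OF cv, of s c t] that assms unfolding q_def
    by (cases "s = t") auto
  have bnd: "q t \<le> - ((g c - g b) / (c - b))" if "t \<in> {a..c}" "t < c" for t
    using concave_on_slope_le(1)[OF cv, of t b c] concave_on_slope_le(2)[OF cv, of t b c]
      that assms unfolding q_def by auto
  have "at c within ({..<c} \<inter> {a..c}) = at_left c"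
    by (rule at_within_nhd[of _ "{a<..<b}"]) (use assms in auto)
  then have "(q \<longlongrightarrow> Sup (q ` ({..<c} \<inter> {a..c}))) (at_left c)"
    using Lim_left_bound[of "{a..c}" c q, OF mono bnd] by simp
  then have "((\<lambda>t. - q t) \<longlongrightarrow> - Sup (q ` ({..<c} \<inter> {a..c}))) (at_left c)"
    by (rule tendsto_minus)
  then show ?thesis
    unfolding left_deriv_def q_def by (simp add: tendsto_Lim)
qed

lemma concave_on_left_deriv_le_slope:
  fixes g :: "real \<Rightarrow> real"
  assumes cv: "concave_on {a..b} g" and "a \<le> y" "y < x" "x \<le> c" "c < b"
  shows "left_deriv g c \<le> (g x - g y) / (x - y)"
proof -
  define q where "q = (\<lambda>t. (g t - g c) / (t - c))"
  have "\<forall>\<^sub>F t in at_left c. t \<in> {y<..<c}"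
    using assms by (intro eventually_at_left_real) auto
  then have "\<forall>\<^sub>F t in at_left c. q t \<le> q y"
    by eventually_elim
      (use concave_on_slope_le(2)[OF cv, of y c] assms in \<open>auto simp: q_def\<close>)
  then have "left_deriv g c \<le> q y"
    using concave_on_left_slope_tendsto[OF cv, of c] assms
    by (intro tendsto_upperbound[of q]) (auto simp: q_def)
  also have "q y \<le> (g x - g y) / (x - y)"
  proof (cases "x = c")
    case True
    then show ?thesis
      by (simp add: q_def) (metis minus_diff_eq minus_divide_divide order_refl)
  next
    case False
    then show ?thesis
      using concave_on_slope_le(1)[OF cv, of y c x] assms unfolding q_def
      by (auto simp: divide_simps) argo
  qed
  finally show ?thesis .
qed

lemma concave_on_left_deriv_mult_le_diff:
  fixes g :: "real \<Rightarrow> real"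
  assumes "concave_on {a..b} g" and "a \<le> y" "y \<le> x" "x \<le> c" "c < b"
  shows "left_deriv g c * (x - y) \<le> g x - g y"
proof (cases "y = x")
  case False
  then have "left_deriv g c \<le> (g x - g y) / (x - y)"
    using concave_on_left_deriv_le_slope[OF assms(1)] assms by simp
  then show ?thesis using False assms by (simp add: pos_le_divide_eq)
qed simp

lemma concave_on_Icc_le_midpoint:
  fixes g :: "real \<Rightarrow> real"
  assumes cv: "concave_on {a..b} g" and t: "t \<in> {a..b}"
  shows "g t \<le> 2 * g ((a + b) / 2) - min (g a) (g b)"
proof -
  have "(1 - 1/2) * g t + (1/2) * g (a + b - t) \<le> g ((1 - 1/2) *\<^sub>R t + (1/2) *\<^sub>R (a + b - t))"
    by (rule concave_onD[OF cv]) (use t in auto)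
  also have "(1 - 1/2) *\<^sub>R t + (1/2) *\<^sub>R (a + b - t) = (a + b) / 2"
    by (simp add: field_simps)
  finally show ?thesis
    using concave_on_ge_min[OF cv, of "a + b - t"] t by auto
qed

lemma concave_on_Icc_bdd_above_abs_diff:
  fixes g :: "real \<Rightarrow> real"
  assumes cv: "concave_on {a..b} g"
  shows "bdd_above ((\<lambda>p. \<bar>g (fst p) - g (snd p)\<bar>) ` ({a..b} \<times> {a..b}))"
proof (rule bdd_aboveI2)
  fix p :: "real \<times> real"
  assume "p \<in> {a..b} \<times> {a..b}"
  then show "\<bar>g (fst p) - g (snd p)\<bar> \<le> 2 * g ((a + b) / 2) - 2 * min (g a) (g b)"
    using concave_on_ge_min[OF cv] concave_on_Icc_le_midpoint[OF cv]
    by (fastforce simp: mem_Times_iff abs_le_iff)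
qed

lemma abs_diff_le_d_max:
  assumes "concave_on {0..1} g" "x \<in> {0..1}" "y \<in> {0..1}"
  shows "\<bar>g x - g y\<bar> \<le> d_max g"
  using cSUP_upper[OF _ concave_on_Icc_bdd_above_abs_diff[OF assms(1)], of "(x, y)"] assms(2,3)
  unfolding d_max_def by simp

lemma d_max_nonneg: "concave_on {0..1} g \<Longrightarrow> 0 \<le> d_max g"
  using abs_diff_le_d_max[of g 0 0] by simp

lemma card_gt_half_le_one:
  fixes w :: "'i \<Rightarrow> real"
  assumes "finite I" "\<And>i. i \<in> I \<Longrightarrow> 0 \<le> w i" "sum w I \<le> 1"
  shows "card {i \<in> I. 1/2 < w i} \<le> 1"
proof -
  have "i = j" if "i \<in> I" "j \<in> I" "1/2 < w i" "1/2 < w j" for i j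
  proof (rule ccontr)
    assume "i \<noteq> j"
    then have "w i + w j \<le> sum w I"
      using sum_mono2[OF assms(1), of "{i, j}" w] that assms(2) by auto
    then show False using that assms(3) by linarith
  qed
  then show ?thesis
    using card_le_Suc0_iff_eq[of "{i \<in> I. 1/2 < w i}"] assms(1) by auto
qed

lemma sum_concave_diff_ge:
  fixes g :: "real \<Rightarrow> real" and v w :: "'i \<Rightarrow> real"
  assumes cv: "concave_on {0..1} g" and fin: "finite I"
    and vw: "\<And>i. i \<in> I \<Longrightarrow> 0 \<le> v i \<and> v i \<le> w i \<and> w i \<le> 1" and sum_w: "sum w I \<le> 1"
  shows "- \<bar>left_deriv g (1/2)\<bar> - d_max g \<le> (\<Sum>i\<in>I. g (w i) - g (v i))"
proof -
  define L where "L = {i \<in> I. w i \<le> 1/2}"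
  define H where "H = {i \<in> I. 1/2 < w i}"
  have split: "I = L \<union> H" "L \<inter> H = {}" unfolding L_def H_def by auto
  have "(\<Sum>i\<in>L. - \<bar>left_deriv g (1/2)\<bar> * (w i - v i)) \<le> (\<Sum>i\<in>L. g (w i) - g (v i))"
  proof (rule sum_mono)
    fix i assume i: "i \<in> L"
    then have "- \<bar>left_deriv g (1/2)\<bar> * (w i - v i) \<le> left_deriv g (1/2) * (w i - v i)"
      using vw[of i] unfolding L_def by (intro mult_right_mono) auto
    also have "\<dots> \<le> g (w i) - g (v i)"
      using concave_on_left_deriv_mult_le_diff[OF cv, of "v i" "w i" "1/2"] vw[of i] i
      unfolding L_def by auto
    finally show "- \<bar>left_deriv g (1/2)\<bar> * (w i - v i) \<le> g (w i) - g (v i)" .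
  qed
  moreover have "(\<Sum>i\<in>L. w i - v i) \<le> 1"
  proof -
    have "(\<Sum>i\<in>L. w i - v i) \<le> (\<Sum>i\<in>L. w i)"
      by (rule sum_mono) (use vw in \<open>auto simp: L_def\<close>)
    also have "\<dots> \<le> sum w I"
      by (rule sum_mono2[OF fin]) (use vw in \<open>auto simp: L_def\<close>)
    finally show ?thesis using sum_w by linarith
  qed
  then have "\<bar>left_deriv g (1/2)\<bar> * (\<Sum>i\<in>L. w i - v i) \<le> \<bar>left_deriv g (1/2)\<bar>"
    by (simp add: mult_left_le)
  then have "- \<bar>left_deriv g (1/2)\<bar> \<le> (\<Sum>i\<in>L. - \<bar>left_deriv g (1/2)\<bar> * (w i - v i))"
    by (simp add: sum_negf sum_distrib_left)
  moreover have "(\<Sum>i\<in>H. - d_max g) \<le> (\<Sum>i\<in>H. g (w i) - g (v i))"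
  proof (rule sum_mono)
    fix i assume "i \<in> H"
    then have "\<bar>g (w i) - g (v i)\<bar> \<le> d_max g"
      using abs_diff_le_d_max[OF cv] vw[of i] unfolding H_def by auto
    then show "- d_max g \<le> g (w i) - g (v i)" by linarith
  qed
  moreover have "- d_max g \<le> (\<Sum>i\<in>H. - d_max g)"
  proof -
    have "0 \<le> w i" if "i \<in> I" for i
      using vw[OF that] by linarith
    from card_gt_half_le_one[OF fin this sum_w] have "card H \<le> 1"
      unfolding H_def .
    then show ?thesis
      using d_max_nonneg[OF cv] by (simp add: mult_left_le_one_le)
  qed
  moreover have "(\<Sum>i\<in>I. g (w i) - g (v i)) = (\<Sum>i\<in>L. g (w i) - g (v i)) + (\<Sum>i\<in>H. g (w i) - g (v i))"
    using fin split by (simp add: sum.union_disjoint)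
  ultimately show ?thesis by linarith
qed

lemma (in prob_space) sum_measure_partition:
  assumes "finite_meas_partition M P"
  shows "(\<Sum>A\<in>P. measure M A) = 1"
proof -
  have "finite P" "P \<subseteq> sets M" "disjoint P" "\<Union>P = space M"
    using assms unfolding finite_meas_partition_def by auto
  then show ?thesis
    using finite_measure_finite_Union[of P id]
    by (auto simp: disjoint_def disjoint_family_on_def prob_space)
qed

theorem mainTheorem18:
  fixes g :: "real \<Rightarrow> real" and M :: "'a measure" and P :: "'a set set"
    and E F :: "'a set"
  assumes "g \<in> G0"
    and "prob_space M"
    and "finite_meas_partition M P"
    and "E \<in> P" and "0 < measure M E" and "measure M E < 1"
    and "F \<in> sets M"
  shows "g_entropy g M P \<ge> g_entropy_restr g M F P - \<bar>left_deriv g (1/2)\<bar> - d_max g"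
proof -
  interpret prob_space M by fact
  have cv: "concave_on {0..1} g"
    using assms(1) unfolding G0_def by auto
  have P: "finite P" "P \<subseteq> sets M"
    using assms(3) unfolding finite_meas_partition_def by auto
  have "measure M (A \<inter> F) \<le> measure M A" if "A \<in> P" for A
    using that P(2) assms(7) by (intro finite_measure_mono) auto
  then have "- \<bar>left_deriv g (1/2)\<bar> - d_max g
      \<le> (\<Sum>A\<in>P. g (measure M A) - g (measure M (A \<inter> F)))"
    using sum_measure_partition[OF assms(3)]
    by (intro sum_concave_diff_ge[OF cv P(1)]) auto
  then show ?thesis
    unfolding g_entropy_def g_entropy_restr_def sum_subtractf by linarith
qed

end
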